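(* Let $\mathcal{L}=(L,\leq)$ be an arbitrary finite lattice and $(\mathcal{L},\mathcal{L}_f,f)$ a lattice reduction triple. Let $M=\langle \mathrm{Agt},Q,Act,d,t,AP,V,\mathcal{L}^+\rangle$ be an mv-CGS over an interpreted lattice $\mathcal{L}^+=(L,\leq,\sigma)$, and let $f(M)=\langle \mathrm{Agt},Q,Act,d,t,AP,V_f,(L_f,\leq_f,\sigma_f)\rangle$ be the image of $M$ under $f$. Then, for any state (respectively, path) formula $\varphi$ of mv-ATL* over $\mathcal{L}$ and any state (respectively, path) $\xi$: $[\![\varphi]\!]_{M,\xi}\in f^{-1}(x)$ iff $[\![\varphi]\!]_{f(M),\xi}=x$.
   Context: Let $\mathcal{L}=(L,\leq)$ be a finite lattice with meet $\sqcap$, join $\sqcup$, least element $\bot$ and greatest element $\top$; for a family of elements, $\inf$ denotes its greatest lower bound (lattice meet) and $\bigsqcup$ its least upper bound (lattice join). Given a countable set $\mathcal{C}$ of constant symbols, an interpreted lattice is $\mathcal{L}^+=(L,\leq,\sigma)$ with $\sigma:\mathcal{C}\to L$. A multi-valued concurrent game structure (mv-CGS) over $\mathcal{L}^+$ is $M=\langle \mathrm{Agt},Q,Act,d,t,AP,V,\mathcal{L}^+\rangle$ where $\mathrm{Agt},Q,Act,AP$ are nonempty finite sets of agents, states, actions and atomic propositions, $d:\mathrm{Agt}\times Q\to 2^{Act}\setminus\{\emptyset\}$ gives the available actions, $t$ is a deterministic transition function assigning a successor $t(q,\alpha_1,\dots,\alpha_k)$ to each state $q$ and each tuple of actions available at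 $q$ (one per agent), and $V:AP\times Q\to L$ is a multi-valued valuation. A path $\lambda=q_0q_1\dots$ is an infinite sequence of states with transitions between consecutive states; $\lambda[i]$ is its $i$-th state and $\lambda[i..\infty]$ its suffix. A (perfect recall) strategy of agent $a$ is $s_a:Q^+\to Act$ with $s_a(q_0\dots q_n)\in d(a,q_n)$; collective strategies $s_A$ for $A\subseteq\mathrm{Agt}$ are tuples of individual strategies, $\Sigma_A$ is their set, and $out(q,s_A)$ is the set of paths from $q$ consistent with $s_A$. Formulas of mv-ATL*$_\to$: state formulas $\varphi::=c\mid p\mid\varphi\wedge\varphi\mid\varphi\vee\varphi\mid\varphi\to\varphi\mid\langle\!\langle A\rangle\!\rangle\gamma\mid[\![A]\!]\gamma$, path formulas $\gamma::=\varphi\mid\gamma\wedge\gamma\mid\gamma\vee\gamma\mid X\gamma\mid\gamma U\gamma\mid\gamma W\gamma$ ($c\in\mathcal{C}$, $p\in AP$, $A\subseteq\mathrm{Agt}$); mv-ATL* is the fragment without $\to$. Semantics: $[\![c]\!]_{M,q}=\sigma(c)$; $[\![p]\!]_{M,q}=V(p,q)$; $\wedge,\vee$ are interpreted by $\sqcap,\sqcup$ (for state and path formulas); $[\![\varphi]\!]_{M,\lambda}=[\![\varphi]\!]_{M,\lambda[0]}$; $[\![X\gamma]\!]_{M,\lambda}=[\![\gamma]\!]_{M,\lambda[1..\infty]}$; $[\![\gamma_1U\gamma_2]\!]_{M,\lambda}=\bigsqcup_{i\ge 0}\inf_{0\le j<i}\{[\![\gamma_2]\!]_{M,\lambda[i..\infty]}\sqcap[\![\gamma_1]\!]_{M,\lambda[j..\infty]}\}$;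 $[\![\gamma_1W\gamma_2]\!]_{M,\lambda}=\inf_{i\ge0}[\![\gamma_1]\!]_{M,\lambda[i..\infty]}\sqcup[\![\gamma_1U\gamma_2]\!]_{M,\lambda}$; $[\![\langle\!\langle A\rangle\!\rangle\gamma]\!]_{M,q}=\bigsqcup_{s_A\in\Sigma_A}\inf_{\lambda\in out(q,s_A)}[\![\gamma]\!]_{M,\lambda}$; $[\![[\![A]\!]\gamma]\!]_{M,q}=\inf_{s_A\in\Sigma_A}\bigsqcup_{\lambda\in out(q,s_A)}[\![\gamma]\!]_{M,\lambda}$; $[\![\varphi_1\to\varphi_2]\!]_{M,q}=\top$ if $[\![\varphi_1]\!]_{M,q}\le[\![\varphi_2]\!]_{M,q}$ and $\bot$ otherwise. A lattice reduction triple (LRT) is $(\mathcal{L},\mathcal{L}_f,f)$ where $\mathcal{L}_f=(L_f,\leq_f)$ is a sublattice of $\mathcal{L}$ and $f:L\to L_f$ preserves arbitrary bounds: $f(\inf_{i\in I}x_i)=\inf_{i\in I}f(x_i)$ and $f(\bigsqcup_{i\in I}x_i)=\bigsqcup_{i\in I}f(x_i)$ for any index set $I$. The image $f(M)$ of $M$ under $f$ has the same agents, states, actions, availability, transitions and propositions, valuation $V_f(p,q)=f(V(p,q))$, and interpreted lattice $(L_f,\leq_f,\sigma_f)$ with $\sigma_f(c)=f(\sigma(c))$. *)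

theory Defs
  imports Main "HOL-Library.Countable"
begin

definition sublattice :: "'l::lattice set \<Rightarrow> bool" where
  "sublattice S \<longleftrightarrow> S \<noteq> {} \<and> (\<forall>a\<in>S. \<forall>b\<in>S. inf a b \<in> S \<and> sup a b \<in> S)"

definition glb_in :: "'l::order set \<Rightarrow> 'l set \<Rightarrow> 'l" where
  "glb_in S X = (THE y. y \<in> S \<and> (\<forall>x\<in>X. y \<le> x) \<and> (\<forall>z\<in>S. (\<forall>x\<in>X. z \<le> x) \<longrightarrow> z \<le> y))"

definition lub_in :: "'l::order set \<Rightarrow> 'l set \<Rightarrow> 'l" where
  "lub_in S X = (THE y. y \<in> S \<and> (\<forall>x\<in>X. x \<le> y) \<and> (\<forall>z\<in>S. (\<forall>x\<in>X. x \<le> z) \<longrightarrow> y \<le> z))"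

definition LRT :: "'l::{complete_lattice,finite} set \<Rightarrow> ('l \<Rightarrow> 'l) \<Rightarrow> bool" where
  "LRT Lf f \<longleftrightarrow> sublattice Lf \<and> (\<forall>x. f x \<in> Lf)
     \<and> (\<forall>X. f (Inf X) = glb_in Lf (f ` X))
     \<and> (\<forall>X. f (Sup X) = lub_in Lf (f ` X))"

text \<open>Agents, states, actions, propositions are finite types 'ag, 'q, 'act, 'ap.
  d a q: available actions; t q \<alpha>: successor under the action profile \<alpha> (one action per agent).\<close>

definition mvcgs :: "('ag \<Rightarrow> 'q \<Rightarrow> 'act set) \<Rightarrow> bool" where
  "mvcgs d \<longleftrightarrow> (\<forall>a q. d a q \<noteq> {})"

definition avail :: "('ag \<Rightarrow> 'q \<Rightarrow> 'act set) \<Rightarrow> 'q \<Rightarrow> ('ag \<Rightarrow> 'act) \<Rightarrow> bool" where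
  "avail d q \<alpha> \<longleftrightarrow> (\<forall>a. \<alpha> a \<in> d a q)"

definition is_path :: "('ag \<Rightarrow> 'q \<Rightarrow> 'act set) \<Rightarrow> ('q \<Rightarrow> ('ag \<Rightarrow> 'act) \<Rightarrow> 'q) \<Rightarrow> (nat \<Rightarrow> 'q) \<Rightarrow> bool" where
  "is_path d t pi \<longleftrightarrow> (\<forall>i. \<exists>\<alpha>. avail d (pi i) \<alpha> \<and> pi (Suc i) = t (pi i) \<alpha>)"

definition suffix :: "nat \<Rightarrow> (nat \<Rightarrow> 'q) \<Rightarrow> (nat \<Rightarrow> 'q)" where
  "suffix k pi = (\<lambda>i. pi (k + i))"

definition prefix :: "(nat \<Rightarrow> 'q) \<Rightarrow> nat \<Rightarrow> 'q list" where
  "prefix pi i = map pi [0..<Suc i]"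

text \<open>Collective perfect-recall strategies for A: one strategy per agent of A
  (histories are nonempty state lists); components outside A are fixed to undefined.\<close>

definition is_strat :: "('ag \<Rightarrow> 'q \<Rightarrow> 'act set) \<Rightarrow> 'ag set \<Rightarrow> ('ag \<Rightarrow> 'q list \<Rightarrow> 'act) \<Rightarrow> bool" where
  "is_strat d A s \<longleftrightarrow> (\<forall>a\<in>A. \<forall>h. h \<noteq> [] \<longrightarrow> s a h \<in> d a (last h)) \<and> (\<forall>a. a \<notin> A \<longrightarrow> s a = undefined)"

definition out :: "('ag \<Rightarrow> 'q \<Rightarrow> 'act set) \<Rightarrow> ('q \<Rightarrow> ('ag \<Rightarrow> 'act) \<Rightarrow> 'q) \<Rightarrow> 'ag set
     \<Rightarrow> 'q \<Rightarrow> ('ag \<Rightarrow> 'q list \<Rightarrow> 'act) \<Rightarrow> (nat \<Rightarrow> 'q) set" where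
  "out d t A q s = {pi. pi 0 = q \<and> (\<forall>i. \<exists>\<alpha>. avail d (pi i) \<alpha> \<and> (\<forall>a\<in>A. \<alpha> a = s a (prefix pi i))
                                        \<and> pi (Suc i) = t (pi i) \<alpha>)}"

section \<open>mv-ATL* syntax (without \<rightarrow>)\<close>

datatype ('c, 'ap, 'ag) sform =
    Const 'c
  | Prop 'ap
  | SAnd "('c, 'ap, 'ag) sform" "('c, 'ap, 'ag) sform"
  | SOr "('c, 'ap, 'ag) sform" "('c, 'ap, 'ag) sform"
  | Ex "'ag set" "('c, 'ap, 'ag) pform"
  | All "'ag set" "('c, 'ap, 'ag) pform"
and ('c, 'ap, 'ag) pform =
    State "('c, 'ap, 'ag) sform"
  | PAnd "('c, 'ap, 'ag) pform" "('c, 'ap, 'ag) pform"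
  | POr "('c, 'ap, 'ag) pform" "('c, 'ap, 'ag) pform"
  | Next "('c, 'ap, 'ag) pform"
  | Until "('c, 'ap, 'ag) pform" "('c, 'ap, 'ag) pform"
  | WUntil "('c, 'ap, 'ag) pform" "('c, 'ap, 'ag) pform"

text \<open>Infop / Supop are the greatest lower / least upper bound operators of the lattice in
  which the model is interpreted; binary meet/join are Infop/Supop of a two-element set.
  For M over L these are Inf/Sup; for f(M) over L_f they are glb_in L_f / lub_in L_f.\<close>

definition until_val :: "('l set \<Rightarrow> 'l) \<Rightarrow> ('l set \<Rightarrow> 'l) \<Rightarrow> (nat \<Rightarrow> 'l) \<Rightarrow> (nat \<Rightarrow> 'l) \<Rightarrow> 'l" where
  "until_val Infop Supop g1 g2 = Supop (range (\<lambda>i. Infop {g2 i, Infop (g1 ` {..<i})}))"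

primrec sem_s :: "('l set \<Rightarrow> 'l) \<Rightarrow> ('l set \<Rightarrow> 'l) \<Rightarrow> ('ag \<Rightarrow> 'q \<Rightarrow> 'act set)
     \<Rightarrow> ('q \<Rightarrow> ('ag \<Rightarrow> 'act) \<Rightarrow> 'q) \<Rightarrow> ('ap \<Rightarrow> 'q \<Rightarrow> 'l) \<Rightarrow> ('c \<Rightarrow> 'l)
     \<Rightarrow> ('c, 'ap, 'ag) sform \<Rightarrow> 'q \<Rightarrow> 'l"
and sem_p :: "('l set \<Rightarrow> 'l) \<Rightarrow> ('l set \<Rightarrow> 'l) \<Rightarrow> ('ag \<Rightarrow> 'q \<Rightarrow> 'act set)
     \<Rightarrow> ('q \<Rightarrow> ('ag \<Rightarrow> 'act) \<Rightarrow> 'q) \<Rightarrow> ('ap \<Rightarrow> 'q \<Rightarrow> 'l) \<Rightarrow> ('c \<Rightarrow> 'l)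
     \<Rightarrow> ('c, 'ap, 'ag) pform \<Rightarrow> (nat \<Rightarrow> 'q) \<Rightarrow> 'l"
where
  "sem_s Infop Supop d t V \<sigma> (Const c) q = \<sigma> c"
| "sem_s Infop Supop d t V \<sigma> (Prop p) q = V p q"
| "sem_s Infop Supop d t V \<sigma> (SAnd \<phi>1 \<phi>2) q =
     Infop {sem_s Infop Supop d t V \<sigma> \<phi>1 q, sem_s Infop Supop d t V \<sigma> \<phi>2 q}"
| "sem_s Infop Supop d t V \<sigma> (SOr \<phi>1 \<phi>2) q =
     Supop {sem_s Infop Supop d t V \<sigma> \<phi>1 q, sem_s Infop Supop d t V \<sigma> \<phi>2 q}"
| "sem_s Infop Supop d t V \<sigma> (Ex A \<gamma>) q =
     Supop ((\<lambda>s. Infop ((\<lambda>pi. sem_p Infop Supop d t V \<sigma> \<gamma> pi) ` out d t A q s)) ` {s. is_strat d A s})"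
| "sem_s Infop Supop d t V \<sigma> (All A \<gamma>) q =
     Infop ((\<lambda>s. Supop ((\<lambda>pi. sem_p Infop Supop d t V \<sigma> \<gamma> pi) ` out d t A q s)) ` {s. is_strat d A s})"
| "sem_p Infop Supop d t V \<sigma> (State \<phi>) pi = sem_s Infop Supop d t V \<sigma> \<phi> (pi 0)"
| "sem_p Infop Supop d t V \<sigma> (PAnd \<gamma>1 \<gamma>2) pi =
     Infop {sem_p Infop Supop d t V \<sigma> \<gamma>1 pi, sem_p Infop Supop d t V \<sigma> \<gamma>2 pi}"
| "sem_p Infop Supop d t V \<sigma> (POr \<gamma>1 \<gamma>2) pi =
     Supop {sem_p Infop Supop d t V \<sigma> \<gamma>1 pi, sem_p Infop Supop d t V \<sigma> \<gamma>2 pi}"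
| "sem_p Infop Supop d t V \<sigma> (Next \<gamma>) pi = sem_p Infop Supop d t V \<sigma> \<gamma> (suffix 1 pi)"
| "sem_p Infop Supop d t V \<sigma> (Until \<gamma>1 \<gamma>2) pi =
     until_val Infop Supop (\<lambda>j. sem_p Infop Supop d t V \<sigma> \<gamma>1 (suffix j pi))
                           (\<lambda>i. sem_p Infop Supop d t V \<sigma> \<gamma>2 (suffix i pi))"
| "sem_p Infop Supop d t V \<sigma> (WUntil \<gamma>1 \<gamma>2) pi =
     Supop {Infop (range (\<lambda>i. sem_p Infop Supop d t V \<sigma> \<gamma>1 (suffix i pi))),
            until_val Infop Supop (\<lambda>j. sem_p Infop Supop d t V \<sigma> \<gamma>1 (suffix j pi))
                                  (\<lambda>i. sem_p Infop Supop d t V \<sigma> \<gamma>2 (suffix i pi))}"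

end

theory Submission
  imports Defs
begin

text \<open>The map f of a lattice reduction triple sends greatest lower and least upper bounds in L
  to the corresponding bounds in L_f. Every clause of the mv-ATL* semantics is assembled from
  constants, valuations and such bounds, so a structural induction on formulas shows that f
  commutes with the semantics: f applied to the value of a formula in M is its value in f(M).
  The theorem is the pointwise reading of this equation; no property of the game structure or
  of paths is needed.\<close>

lemma until_val_hom:
  assumes Inf_hom: "\<And>X. f (Infop X) = Infop' (f ` X)"
    and Sup_hom: "\<And>X. f (Supop X) = Supop' (f ` X)"
  shows "f (until_val Infop Supop g1 g2) = until_val Infop' Supop' (f \<circ> g1) (f \<circ> g2)"
  by (simp add: until_val_def Inf_hom Sup_hom image_image)

lemma sem_hom:
  assumes Inf_hom: "\<And>X. f (Infop X) = Infop' (f ` X)"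
    and Sup_hom: "\<And>X. f (Supop X) = Supop' (f ` X)"
  shows "f (sem_s Infop Supop d t V \<sigma> \<phi> q)
           = sem_s Infop' Supop' d t (\<lambda>p q. f (V p q)) (\<lambda>c. f (\<sigma> c)) \<phi> q"
    and "f (sem_p Infop Supop d t V \<sigma> \<gamma> pi)
           = sem_p Infop' Supop' d t (\<lambda>p q. f (V p q)) (\<lambda>c. f (\<sigma> c)) \<gamma> pi"
proof (induction \<phi> and \<gamma> arbitrary: q and pi)
  case (Until \<gamma>1 \<gamma>2)
  then show ?case
    by (simp add: until_val_hom[of f Infop Infop' Supop Supop', OF Inf_hom Sup_hom] comp_def)
next
  case (WUntil \<gamma>1 \<gamma>2)
  then show ?case
    by (simp add: until_val_hom[of f Infop Infop' Supop Supop', OF Inf_hom Sup_hom] comp_def Inf_hom Sup_hom image_image)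
qed (simp_all add: Inf_hom Sup_hom image_image)

theorem theorem5p4:
  fixes f :: "'l::{complete_lattice,finite} \<Rightarrow> 'l"
    and Lf :: "'l set"
    and d :: "'ag::finite \<Rightarrow> 'q::finite \<Rightarrow> 'act::finite set"
    and t :: "'q \<Rightarrow> ('ag \<Rightarrow> 'act) \<Rightarrow> 'q"
    and V :: "'ap::finite \<Rightarrow> 'q \<Rightarrow> 'l"
    and \<sigma> :: "'c::countable \<Rightarrow> 'l"
  assumes lrt: "LRT Lf f"
    and cgs: "mvcgs d"
    and x: "x \<in> Lf"
  shows "(\<forall>(\<phi> :: ('c, 'ap, 'ag) sform) q.
            f (sem_s Inf Sup d t V \<sigma> \<phi> q) = x \<longleftrightarrow>
            sem_s (glb_in Lf) (lub_in Lf) d t (\<lambda>p q. f (V p q)) (\<lambda>c. f (\<sigma> c)) \<phi> q = x)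
       \<and> (\<forall>(\<gamma> :: ('c, 'ap, 'ag) pform) pi. is_path d t pi \<longrightarrow>
            (f (sem_p Inf Sup d t V \<sigma> \<gamma> pi) = x \<longleftrightarrow>
             sem_p (glb_in Lf) (lub_in Lf) d t (\<lambda>p q. f (V p q)) (\<lambda>c. f (\<sigma> c)) \<gamma> pi = x))"
proof -
  have Inf_hom: "\<And>X. f (Inf X) = glb_in Lf (f ` X)"
    and Sup_hom: "\<And>X. f (Sup X) = lub_in Lf (f ` X)"
    using lrt by (simp_all add: LRT_def)
  show ?thesis
    by (simp add: sem_hom[of f Inf "glb_in Lf" Sup "lub_in Lf", OF Inf_hom Sup_hom])
qed

end
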